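(* Let $d=2$. There is a constant $c_2$ depending only on the dimension such that for all $N\ge1$, $n\ge1$ and integers $0=i_0<i_1<\cdots<i_n\le N$, $$\sum_{x_1,\dots,x_n\in\mathbb{Z}^2}\ \prod_{k=1}^n p_0^2(i_k-i_{k-1},x_k-x_{k-1})\left(\sum_{x\in\mathbb{Z}^2}|x|^2p_0(N-i_n,x-x_n)\right)^2\le c_2^nN^2\prod_{k=1}^n(i_k-i_{k-1})^{-1},$$ where $x_0=0$.
   Context: $p_0(n,x)$ is the probability that simple random walk on $\mathbb{Z}^2$ started at $0$ is at $x$ at time $n$; $|\cdot|$ is the Euclidean norm. *)

theory Defs
  imports "HOL-Analysis.Analysis"
begin

fun p0 :: "nat \<Rightarrow> int \<times> int \<Rightarrow> real" where
  "p0 0 x = (if x = (0, 0) then 1 else 0)"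
| "p0 (Suc n) (a, b) =
     (p0 n (a - 1, b) + p0 n (a + 1, b) + p0 n (a, b - 1) + p0 n (a, b + 1)) / 4"

definition sqnorm :: "int \<times> int \<Rightarrow> real" where
  "sqnorm x = real_of_int (fst x) ^ 2 + real_of_int (snd x) ^ 2"

end

theory Submission
  imports Defs
begin

text \<open>
  In the rotated coordinates a + b and a - b the planar walk is a pair of independent
  one-dimensional walks, so p0 t x is a product of two binomial probabilities, and the bound
  binom(2k, k)^2 (2k + 1) \<le> 16^k on central binomial coefficients gives p0 t x \<le> 2 / (t + 1).
  Hence each squared kernel p0 t x ^ 2 is at most (2 / t) p0 t x. The inner sum is the second
  moment |x_n|^2 + m of the walk started at x_n after m = N - i_n steps. After these two
  replacements the outer sum is bounded by \<Prod>(2 / t_k) times E (|S_(i_n)|^2 + m)^2, where S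
  is the walk started at 0 (Markov property). Iterating the one-step averaging operator on
  polynomials in |x|^2 computes this fourth moment exactly: 2 i_n^2 - i_n + 2 m i_n + m^2,
  which is at most 2 N^2.
\<close>

lemma summable_on_finite_support:
  fixes f :: "'a \<Rightarrow> real"
  assumes "finite {x\<in>A. f x \<noteq> 0}"
  shows "f summable_on A"
proof -
  have "f summable_on {x\<in>A. f x \<noteq> 0} \<longleftrightarrow> f summable_on A"
    by (rule summable_on_cong_neutral) auto
  with assms show ?thesis by simp
qed

lemma infsum_length_lists_le:
  fixes f :: "'a list \<Rightarrow> real"
  assumes "\<And>xs. f xs \<ge> 0"
    and "\<And>S. finite S \<Longrightarrow> (\<Sum>xs | set xs \<subseteq> S \<and> length xs = n. f xs) \<le> b"
  shows "(\<Sum>\<^sub>\<infinity>xs\<in>{xs. length xs = n}. f xs) \<le> b"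
proof -
  have finite_le: "sum f F \<le> b" if "finite F" "F \<subseteq> {xs. length xs = n}" for F
  proof -
    have "sum f F \<le> (\<Sum>xs | set xs \<subseteq> \<Union> (set ` F) \<and> length xs = n. f xs)"
      using that by (intro sum_mono2 finite_lists_length_eq assms(1)) auto
    also have "\<dots> \<le> b" using that(1) by (intro assms(2)) simp
    finally show ?thesis .
  qed
  then have "f summable_on {xs. length xs = n}"
    by (intro nonneg_bdd_above_summable_on bdd_aboveI2[where M = b]) (auto simp: assms(1))
  then show ?thesis using finite_le by (rule infsum_le_finite_sums)
qed

lemma lists_length_Suc_eq_append:
  "{xs. set xs \<subseteq> S \<and> length xs = Suc n} = (\<lambda>(xs, y). xs @ [y]) ` ({xs. set xs \<subseteq> S \<and> length xs = n} \<times> S)"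
  by (fastforce simp: length_Suc_conv_rev image_iff)

lemma sum_lists_length_Suc:
  "(\<Sum>xs | set xs \<subseteq> S \<and> length xs = Suc n. g xs)
     = (\<Sum>xs | set xs \<subseteq> S \<and> length xs = n. \<Sum>y\<in>S. g (xs @ [y]))"
proof -
  have "inj_on (\<lambda>(xs, y). xs @ [y]) ({xs. set xs \<subseteq> S \<and> length xs = n} \<times> S)"
    by (auto simp: inj_on_def)
  then show ?thesis
    unfolding lists_length_Suc_eq_append by (simp add: sum.reindex sum.cartesian_product split_def)
qed

lemma of_nat_sum_increments:
  fixes i :: "nat \<Rightarrow> nat"
  assumes "\<And>k. k \<in> {1..n} \<Longrightarrow> i (k - 1) \<le> i k"
  shows "real (\<Sum>k=1..n. i k - i (k - 1)) = real (i n) - real (i 0)"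
proof -
  have "real (\<Sum>k=1..n. i k - i (k - 1)) = (\<Sum>k\<in>{Suc 0..n}. real (i k) - real (i (k - 1)))"
    using assms by (simp add: of_nat_diff)
  also have "\<dots> = real (i n) - real (i 0)" by (rule sum_telescope'') simp
  finally show ?thesis .
qed

section \<open>Binomial coefficients\<close>

lemma odd_middle_binomial: "Suc k * (Suc (2 * k) choose k) = Suc (2 * k) * (2 * k choose k)"
  using Suc_times_binomial_eq[of "2 * k" k] central_binomial_odd[of "Suc (2 * k)"] by simp

lemma central_binomial_Suc: "Suc k * (2 * Suc k choose Suc k) = 2 * Suc (2 * k) * (2 * k choose k)"
proof -
  have "2 * Suc k choose Suc k = (Suc (2 * k) choose k) + (Suc (2 * k) choose Suc k)"
    by (simp del: binomial_Suc_Suc add: binomial_Suc_Suc[symmetric])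
  also have "Suc (2 * k) choose Suc k = Suc (2 * k) choose k"
    using central_binomial_odd[of "Suc (2 * k)"] by (simp del: binomial_Suc_Suc)
  finally have "2 * Suc k choose Suc k = 2 * (Suc (2 * k) choose k)"
    by (simp del: binomial_Suc_Suc)
  then show ?thesis using odd_middle_binomial[of k] by (metis mult.assoc mult.left_commute)
qed

lemma central_binomial_sq_le: "real (2 * k choose k) ^ 2 * (2 * real k + 1) \<le> 16 ^ k"
proof (induction k)
  case (Suc k)
  define c d where "c = real (2 * k choose k)" and "d = real (2 * Suc k choose Suc k)"
  have "real (Suc k) * d = real (2 * Suc (2 * k)) * c"
    using arg_cong[OF central_binomial_Suc[of k], of real] unfolding c_def d_def
    by (simp only: of_nat_mult)
  then have rec: "(real k + 1) * d = 2 * (2 * real k + 1) * c" by (simp add: algebra_simps)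
  have "(real k + 1) ^ 2 * (d ^ 2 * (2 * real (Suc k) + 1)) = ((real k + 1) * d) ^ 2 * (2 * real k + 3)"
    by (simp add: power2_eq_square algebra_simps)
  also have "\<dots> = 4 * (2 * real k + 1) * (2 * real k + 3) * (c ^ 2 * (2 * real k + 1))"
    unfolding rec by (simp add: power2_eq_square algebra_simps)
  also have "\<dots> \<le> 4 * (2 * real k + 1) * (2 * real k + 3) * 16 ^ k"
    using Suc.IH by (intro mult_left_mono) (auto simp: c_def)
  also have "\<dots> \<le> (real k + 1) ^ 2 * 16 ^ Suc k"
    by (simp add: power2_eq_square algebra_simps)
  finally show ?case by (simp add: d_def)
qed simp

lemma middle_binomial_sq_le: "real (n choose (n div 2)) ^ 2 * (real n + 1) \<le> 2 * 4 ^ n"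
proof -
  have "\<exists>k. n = 2 * k \<or> n = Suc (2 * k)" by presburger
  then obtain k where "n = 2 * k \<or> n = Suc (2 * k)" ..
  then show ?thesis
  proof
    assume n: "n = 2 * k"
    have "real (n choose (n div 2)) ^ 2 * (real n + 1) \<le> 4 ^ n"
      using central_binomial_sq_le[of k] by (simp add: n power_mult)
    then show ?thesis by (rule order_trans) simp
  next
    assume n: "n = Suc (2 * k)"
    have "Suc k * (n choose (n div 2)) = Suc (2 * k) * (2 * k choose k)"
      using odd_middle_binomial[of k] by (simp add: n)
    also have "\<dots> \<le> Suc k * (2 * (2 * k choose k))" by (simp add: algebra_simps)
    finally have "n choose (n div 2) \<le> 2 * (2 * k choose k)" by (simp only: Suc_mult_le_cancel1)
    then have "real (n choose (n div 2)) \<le> 2 * real (2 * k choose k)"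
      by (metis of_nat_le_iff of_nat_mult of_nat_numeral)
    then have "real (n choose (n div 2)) ^ 2 * (real n + 1) \<le> (2 * real (2 * k choose k)) ^ 2 * (real n + 1)"
      by (intro mult_right_mono power_mono) auto
    also have "\<dots> \<le> 8 * (real (2 * k choose k) ^ 2 * (2 * real k + 1))"
      by (simp add: n power2_eq_square algebra_simps)
    also have "\<dots> \<le> 2 * 4 ^ n"
      using central_binomial_sq_le[of k] by (simp add: n power_mult)
    finally show ?thesis .
  qed
qed

definition binom_int :: "nat \<Rightarrow> int \<Rightarrow> nat" where
  "binom_int n j = (if j < 0 then 0 else n choose nat j)"

lemma binom_int_Suc: "binom_int (Suc n) j = binom_int n (j - 1) + binom_int n j"
proof (cases "j \<le> 0")
  case False
  then have "nat j = Suc (nat (j - 1))" by simp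
  with False show ?thesis by (simp add: binom_int_def)
qed (auto simp: binom_int_def)

section \<open>The averaging operator of the walk\<close>

lemma p0_nonneg: "p0 t x \<ge> 0"
  by (induction t arbitrary: x) (auto simp: case_prod_beta intro!: add_nonneg_nonneg)

lemma p0_eq_0_outside_square:
  "int t < \<bar>a\<bar> \<or> int t < \<bar>b\<bar> \<Longrightarrow> p0 t (a, b) = 0"
proof (induction t arbitrary: a b)
  case (Suc t)
  have "p0 t (a', b') = 0" if "\<bar>a' - a\<bar> + \<bar>b' - b\<bar> \<le> 1" for a' b'
    by (rule Suc.IH) (use Suc.prems that in arith)
  then show ?case by simp
qed auto

lemma finite_p0_support: "finite {y. p0 t (y - z) \<noteq> 0}"
proof (rule finite_subset)
  show "{y. p0 t (y - z) \<noteq> 0} \<subseteq>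
        {fst z - int t..fst z + int t} \<times> {snd z - int t..snd z + int t}"
  proof
    fix y assume "y \<in> {y. p0 t (y - z) \<noteq> 0}"
    then have "p0 t (fst y - fst z, snd y - snd z) \<noteq> 0" by (cases y, cases z) simp
    then show "y \<in> {fst z - int t..fst z + int t} \<times> {snd z - int t..snd z + int t}"
      using p0_eq_0_outside_square by (force simp: mem_Times_iff)
  qed
qed simp

lemma p0_kernel_summable: "(\<lambda>y. p0 t (y - z) * f y) summable_on A"
  by (rule summable_on_finite_support, rule finite_subset[OF _ finite_p0_support]) auto

definition walk_op :: "(int \<times> int \<Rightarrow> real) \<Rightarrow> int \<times> int \<Rightarrow> real" where
  "walk_op f z = (f (z + (1, 0)) + f (z - (1, 0)) + f (z + (0, 1)) + f (z - (0, 1))) / 4"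

lemma p0_Suc_diff:
  "p0 (Suc t) (y - z) = (p0 t (y - (z + (1, 0))) + p0 t (y - (z - (1, 0)))
     + p0 t (y - (z + (0, 1))) + p0 t (y - (z - (0, 1)))) / 4"
  by (cases y, cases z) (simp add: algebra_simps)

lemma infsum_p0_Suc:
  "(\<Sum>\<^sub>\<infinity>y. p0 (Suc t) (y - z) * f y) = walk_op (\<lambda>w. \<Sum>\<^sub>\<infinity>y. p0 t (y - w) * f y) z"
proof -
  define g where "g w y = p0 t (y - w) * f y" for w y
  have summable: "g w summable_on UNIV" for w
    unfolding g_def by (rule p0_kernel_summable)
  have distrib4: "(a + b + c + d) / 4 * e = (a * e + b * e + c * e + d * e) * inverse 4" for a b c d e :: real
    by (simp add: field_simps)
  have "(\<Sum>\<^sub>\<infinity>y. p0 (Suc t) (y - z) * f y) = (\<Sum>\<^sub>\<infinity>y. (g (z + (1, 0)) y + g (z - (1, 0)) y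
          + g (z + (0, 1)) y + g (z - (0, 1)) y) * inverse 4)"
    unfolding p0_Suc_diff g_def distrib4 ..
  also have "\<dots> = (infsum (g (z + (1, 0))) UNIV + infsum (g (z - (1, 0))) UNIV
          + infsum (g (z + (0, 1))) UNIV + infsum (g (z - (0, 1))) UNIV) * inverse 4"
    by (simp only: infsum_cmult_left infsum_add summable_on_add summable)
  also have "\<dots> = walk_op (\<lambda>w. \<Sum>\<^sub>\<infinity>y. p0 t (y - w) * f y) z"
    unfolding walk_op_def divide_inverse g_def ..
  finally show ?thesis .
qed

lemma infsum_p0_eq_walk_op_pow: "(\<Sum>\<^sub>\<infinity>y. p0 t (y - z) * f y) = (walk_op ^^ t) f z"
proof (induction t arbitrary: z)
  case 0
  have "p0 0 (y - z) = (if y = z then 1 else 0)" for y by (cases y, cases z) auto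
  then have "(\<Sum>\<^sub>\<infinity>y. p0 0 (y - z) * f y) = (\<Sum>\<^sub>\<infinity>y\<in>{z}. p0 0 (y - z) * f y)"
    by (intro infsum_cong_neutral) auto
  then show ?case by (simp add: zero_prod_def)
next
  case (Suc t)
  then show ?case by (simp add: infsum_p0_Suc walk_op_def)
qed

lemma sum_p0_le_walk_op_pow:
  assumes "finite S" "\<And>y. g y \<ge> 0"
  shows "(\<Sum>y\<in>S. p0 t (y - z) * g y) \<le> (walk_op ^^ t) g z"
proof -
  have "(\<Sum>y\<in>S. p0 t (y - z) * g y) = (\<Sum>\<^sub>\<infinity>y\<in>S. p0 t (y - z) * g y)"
    using assms(1) by simp
  also have "\<dots> \<le> (\<Sum>\<^sub>\<infinity>y. p0 t (y - z) * g y)"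
    by (rule infsum_mono_neutral) (simp_all add: p0_kernel_summable p0_nonneg assms(2))
  also have "\<dots> = (walk_op ^^ t) g z" by (rule infsum_p0_eq_walk_op_pow)
  finally show ?thesis .
qed

lemma walk_op_pow_nonneg: "(\<And>y. f y \<ge> 0) \<Longrightarrow> (walk_op ^^ t) f z \<ge> 0"
  by (induction t arbitrary: z) (auto simp: walk_op_def)

lemma walk_op_pow_sqnorm: "(walk_op ^^ t) sqnorm = (\<lambda>z. sqnorm z + real t)"
proof (induction t)
  case (Suc t)
  show ?case
  proof
    fix z :: "int \<times> int"
    have "(walk_op ^^ Suc t) sqnorm z = walk_op (\<lambda>z. sqnorm z + real t) z"
      using Suc by simp
    then show "(walk_op ^^ Suc t) sqnorm z = sqnorm z + real (Suc t)"
      by (cases z) (simp add: walk_op_def sqnorm_def power2_eq_square algebra_simps)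
  qed
qed simp

lemma infsum_sqnorm_p0: "(\<Sum>\<^sub>\<infinity>y. sqnorm y * p0 t (y - z)) = sqnorm z + real t"
  using infsum_p0_eq_walk_op_pow[of t z sqnorm] by (simp add: mult.commute walk_op_pow_sqnorm)

lemma walk_op_sqnorm_quadratic:
  "walk_op (\<lambda>y. sqnorm y ^ 2 + \<alpha> * sqnorm y + \<beta>)
     = (\<lambda>y. sqnorm y ^ 2 + (\<alpha> + 4) * sqnorm y + (1 + \<alpha> + \<beta>))"
proof
  fix z :: "int \<times> int"
  obtain a b where "z = (a, b)" by (cases z)
  then show "walk_op (\<lambda>y. sqnorm y ^ 2 + \<alpha> * sqnorm y + \<beta>) z
     = sqnorm z ^ 2 + (\<alpha> + 4) * sqnorm z + (1 + \<alpha> + \<beta>)"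
    by (simp add: walk_op_def sqnorm_def power2_eq_square field_simps)
qed

lemma walk_op_pow_sqnorm_plus_sq:
  "(walk_op ^^ t) (\<lambda>y. (sqnorm y + c) ^ 2) = (\<lambda>y. sqnorm y ^ 2 + (4 * real t + 2 * c) * sqnorm y
     + (2 * real t ^ 2 - real t + 2 * c * real t + c ^ 2))"
proof (induction t)
  case 0
  then show ?case by (simp add: power2_eq_square algebra_simps)
next
  case (Suc t)
  then show ?case
    by (simp add: walk_op_sqnorm_quadratic) (simp add: power2_eq_square algebra_simps)
qed

section \<open>The bound p0 t x \<le> 2 / (t + 1)\<close>

text \<open>The number of \<plusminus>1 sequences of length n with sum m.\<close>

definition paths_to :: "nat \<Rightarrow> int \<Rightarrow> nat" where
  "paths_to n m = (if even (int n + m) then binom_int n ((int n + m) div 2) else 0)"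

lemma paths_to_0: "paths_to 0 m = (if m = 0 then 1 else 0)"
  by (auto simp: paths_to_def binom_int_def elim!: evenE)

lemma paths_to_Suc: "paths_to (Suc n) m = paths_to n (m - 1) + paths_to n (m + 1)"
proof -
  define s where "s = int n + m"
  have shifts: "int (Suc n) + m = s + 1" "int n + (m - 1) = s - 1" "int n + (m + 1) = s + 1"
    by (simp_all add: s_def)
  have "(s - 1) div 2 = (s + 1) div 2 - 1" by presburger
  then show ?thesis unfolding paths_to_def shifts by (simp add: binom_int_Suc)
qed

lemma paths_to_le: "paths_to n m \<le> n choose (n div 2)"
  using binomial_maximum by (simp add: paths_to_def binom_int_def)

lemma p0_eq_paths_to: "p0 n (a, b) = real (paths_to n (a + b) * paths_to n (a - b)) / 4 ^ n"
proof (induction n arbitrary: a b)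
  case (Suc n)
  have "a - 1 + b = a + b - 1" "a - 1 - b = a - b - 1" "a + 1 + b = a + b + 1" "a + 1 - b = a - b + 1"
     "a + (b - 1) = a + b - 1" "a - (b - 1) = a - b + 1" "a + (b + 1) = a + b + 1" "a - (b + 1) = a - b - 1"
    by simp_all
  then show ?case by (simp add: Suc paths_to_Suc algebra_simps add_divide_distrib)
qed (simp add: paths_to_0)

lemma p0_le: "p0 n x \<le> 2 / (real n + 1)"
proof -
  obtain a b where x: "x = (a, b)" by (cases x)
  have "p0 n x \<le> real ((n choose (n div 2)) * (n choose (n div 2))) / 4 ^ n"
    unfolding x p0_eq_paths_to by (intro divide_right_mono of_nat_mono mult_le_mono paths_to_le) simp
  also have "\<dots> \<le> 2 / (real n + 1)"
    using middle_binomial_sq_le[of n] by (simp add: field_simps power2_eq_square)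
  finally show ?thesis .
qed

lemma p0_sq_le:
  assumes "1 \<le> t"
  shows "p0 t x ^ 2 \<le> 2 / real t * p0 t x"
proof -
  have "p0 t x \<le> 2 / (real t + 1)" by (rule p0_le)
  also have "\<dots> \<le> 2 / real t" using assms by (intro divide_left_mono) auto
  finally have "p0 t x * p0 t x \<le> 2 / real t * p0 t x"
    by (rule mult_right_mono) (rule p0_nonneg)
  then show ?thesis by (simp only: power2_eq_square)
qed

section \<open>Sums over paths\<close>

definition walk_pos :: "(int \<times> int) list \<Rightarrow> nat \<Rightarrow> int \<times> int" where
  "walk_pos xs = (\<lambda>k. if k = 0 then (0, 0) else xs ! (k - 1))"

definition path_prob :: "(nat \<Rightarrow> nat) \<Rightarrow> (int \<times> int) list \<Rightarrow> real" where
  "path_prob t xs = (\<Prod>k\<in>{1..length xs}. p0 (t k) (walk_pos xs k - walk_pos xs (k - 1)))"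

lemma path_prob_nonneg: "path_prob t xs \<ge> 0"
  by (simp add: path_prob_def prod_nonneg p0_nonneg)

lemma walk_pos_append: "k \<le> length xs \<Longrightarrow> walk_pos (xs @ [y]) k = walk_pos xs k"
  by (auto simp: walk_pos_def nth_append)

lemma walk_pos_append_last: "walk_pos (xs @ [y]) (Suc (length xs)) = y"
  by (simp add: walk_pos_def)

lemma path_prob_append:
  "path_prob t (xs @ [y]) = path_prob t xs * p0 (t (Suc (length xs))) (y - walk_pos xs (length xs))"
proof -
  have "(\<Prod>k\<in>{1..length xs}. p0 (t k) (walk_pos (xs @ [y]) k - walk_pos (xs @ [y]) (k - 1)))
      = path_prob t xs"
    unfolding path_prob_def by (intro prod.cong) (auto simp: walk_pos_append)
  then show ?thesis
    by (simp add: path_prob_def walk_pos_append walk_pos_append_last del: One_nat_def)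
qed

lemma sum_path_prob_le_walk_op_pow:
  assumes "finite S" "\<And>y. g y \<ge> 0"
  shows "(\<Sum>xs | set xs \<subseteq> S \<and> length xs = n. path_prob t xs * g (walk_pos xs n))
    \<le> (walk_op ^^ (\<Sum>k=1..n. t k)) g (0, 0)"
  using assms(2)
proof (induction n arbitrary: g)
  case 0
  have "{xs. set xs \<subseteq> S \<and> length xs = 0} = {[]}" by auto
  then show ?case by (simp add: path_prob_def walk_pos_def)
next
  case (Suc n)
  have "(\<Sum>xs | set xs \<subseteq> S \<and> length xs = Suc n. path_prob t xs * g (walk_pos xs (Suc n)))
      = (\<Sum>xs | set xs \<subseteq> S \<and> length xs = n.
           path_prob t xs * (\<Sum>y\<in>S. p0 (t (Suc n)) (y - walk_pos xs n) * g y))"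
    unfolding sum_lists_length_Suc
    by (intro sum.cong refl)
      (auto simp: path_prob_append walk_pos_append_last sum_distrib_left mult.assoc)
  also have "\<dots> \<le> (\<Sum>xs | set xs \<subseteq> S \<and> length xs = n.
           path_prob t xs * (walk_op ^^ t (Suc n)) g (walk_pos xs n))"
    by (intro sum_mono mult_left_mono sum_p0_le_walk_op_pow assms path_prob_nonneg Suc.prems)
  also have "\<dots> \<le> (walk_op ^^ (\<Sum>k=1..n. t k)) ((walk_op ^^ t (Suc n)) g) (0, 0)"
    by (intro Suc.IH walk_op_pow_nonneg Suc.prems)
  also have "\<dots> = (walk_op ^^ (\<Sum>k=1..Suc n. t k)) g (0, 0)"
    by (simp add: funpow_add)
  finally show ?case .
qed

lemma sum_prod_p0_sq_moment_le:
  assumes "finite S" and t_pos: "\<And>k. k \<in> {1..n} \<Longrightarrow> 1 \<le> t k"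
  shows "(\<Sum>xs | set xs \<subseteq> S \<and> length xs = n.
      (\<Prod>k\<in>{1..n}. p0 (t k) (walk_pos xs k - walk_pos xs (k - 1)) ^ 2) * (sqnorm (walk_pos xs n) + real m) ^ 2)
    \<le> 2 * (\<Prod>k\<in>{1..n}. 2 / real (t k)) * (real (\<Sum>k=1..n. t k) + real m) ^ 2"
proof -
  define C where "C = (\<Prod>k\<in>{1..n}. 2 / real (t k))"
  define s where "s = (\<Sum>k=1..n. t k)"
  have C_nonneg: "C \<ge> 0" by (simp add: C_def prod_nonneg)
  have sq_le: "(\<Prod>k\<in>{1..n}. p0 (t k) (walk_pos xs k - walk_pos xs (k - 1)) ^ 2) \<le> C * path_prob t xs"
    if "length xs = n" for xs
  proof -
    have "(\<Prod>k\<in>{1..n}. p0 (t k) (walk_pos xs k - walk_pos xs (k - 1)) ^ 2)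
        \<le> (\<Prod>k\<in>{1..n}. 2 / real (t k) * p0 (t k) (walk_pos xs k - walk_pos xs (k - 1)))"
      by (intro prod_mono conjI p0_sq_le t_pos) simp_all
    then show ?thesis using that by (simp only: C_def path_prob_def prod.distrib)
  qed
  have "(\<Sum>xs | set xs \<subseteq> S \<and> length xs = n.
      (\<Prod>k\<in>{1..n}. p0 (t k) (walk_pos xs k - walk_pos xs (k - 1)) ^ 2) * (sqnorm (walk_pos xs n) + real m) ^ 2)
    \<le> C * (\<Sum>xs | set xs \<subseteq> S \<and> length xs = n. path_prob t xs * (sqnorm (walk_pos xs n) + real m) ^ 2)"
    unfolding sum_distrib_left mult.assoc[symmetric] by (intro sum_mono mult_right_mono sq_le) simp_all
  also have "\<dots> \<le> C * (walk_op ^^ s) (\<lambda>y. (sqnorm y + real m) ^ 2) (0, 0)"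
    unfolding s_def by (intro mult_left_mono sum_path_prob_le_walk_op_pow assms C_nonneg) simp
  also have "\<dots> = C * (2 * real s ^ 2 - real s + 2 * real m * real s + real m ^ 2)"
    by (simp add: walk_op_pow_sqnorm_plus_sq) (simp add: sqnorm_def)
  also have "\<dots> \<le> C * (2 * (real s + real m) ^ 2)"
    by (intro mult_left_mono C_nonneg) (simp add: power2_eq_square algebra_simps)
  finally show ?thesis by (simp add: C_def s_def mult_ac)
qed

theorem lemma22:
  shows "\<exists>c2 :: real. \<forall>(N::nat) (n::nat) (i::nat \<Rightarrow> nat).
     N \<ge> 1 \<longrightarrow> n \<ge> 1 \<longrightarrow> i 0 = 0 \<longrightarrow> (\<forall>k<n. i k < i (Suc k)) \<longrightarrow> i n \<le> N \<longrightarrow>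
     (\<Sum>\<^sub>\<infinity> xs \<in> {xs :: (int \<times> int) list. length xs = n}.
        let x = (\<lambda>k. if k = 0 then (0, 0) else xs ! (k - 1)) in
        (\<Prod>k\<in>{1..n}. (p0 (i k - i (k - 1)) (x k - x (k - 1))) ^ 2) *
        (\<Sum>\<^sub>\<infinity> y \<in> UNIV. sqnorm y * p0 (N - i n) (y - x n)) ^ 2)
     \<le> c2 ^ n * real N ^ 2 * (\<Prod>k\<in>{1..n}. 1 / real (i k - i (k - 1)))"
proof (intro exI[of _ 8] allI impI)
  fix N n :: nat and i :: "nat \<Rightarrow> nat"
  assume "N \<ge> 1" "n \<ge> 1" "i 0 = 0" and incr: "\<forall>k<n. i k < i (Suc k)" and "i n \<le> N"
  define t where "t k = i k - i (k - 1)" for k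
  have step: "i (k - 1) < i k" if "k \<in> {1..n}" for k
    using that incr[rule_format, of "k - 1"] by auto
  have t_pos: "1 \<le> t k" if "k \<in> {1..n}" for k
    using step[OF that] by (simp add: t_def)
  have total: "real (\<Sum>k=1..n. t k) + real (N - i n) = real N"
    using of_nat_sum_increments[of n i] step \<open>i 0 = 0\<close> \<open>i n \<le> N\<close> by (simp add: t_def less_imp_le)
  have "(\<Sum>\<^sub>\<infinity> xs \<in> {xs :: (int \<times> int) list. length xs = n}.
        let x = (\<lambda>k. if k = 0 then (0, 0) else xs ! (k - 1)) in
        (\<Prod>k\<in>{1..n}. (p0 (i k - i (k - 1)) (x k - x (k - 1))) ^ 2) *
        (\<Sum>\<^sub>\<infinity> y \<in> UNIV. sqnorm y * p0 (N - i n) (y - x n)) ^ 2)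
    = (\<Sum>\<^sub>\<infinity>xs\<in>{xs. length xs = n}. (\<Prod>k\<in>{1..n}. p0 (t k) (walk_pos xs k - walk_pos xs (k - 1)) ^ 2)
        * (sqnorm (walk_pos xs n) + real (N - i n)) ^ 2)" (is "?lhs = _")
    unfolding walk_pos_def[symmetric] Let_def infsum_sqnorm_p0 t_def ..
  also have "\<dots> \<le> 2 * (\<Prod>k\<in>{1..n}. 2 / real (t k)) * real N ^ 2"
    using sum_prod_p0_sq_moment_le[where t = t and n = n and m = "N - i n", OF _ t_pos] total
    by (intro infsum_length_lists_le) (auto intro!: mult_nonneg_nonneg prod_nonneg)
  also have "\<dots> = 2 * 2 ^ n * real N ^ 2 * (\<Prod>k\<in>{1..n}. 1 / real (t k))"
    by (simp add: prod_dividef)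
  also have "\<dots> \<le> 2 ^ (3 * n) * real N ^ 2 * (\<Prod>k\<in>{1..n}. 1 / real (t k))"
    using \<open>n \<ge> 1\<close> by (intro mult_right_mono prod_nonneg) (simp_all flip: power_Suc)
  finally show "?lhs \<le> 8 ^ n * real N ^ 2 * (\<Prod>k\<in>{1..n}. 1 / real (i k - i (k - 1)))"
    by (simp add: t_def power_mult)
qed

end
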